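(* Let $\mathbf{T}\in\{0,1\}^{n\times\ell}$ be a matrix all of whose columns are dirty, with $\delta(\mathbf{T})\le 2$. If $\mathcal{T}_2\neq\emptyset$, then $\ell\le|\mathcal{T}_2|+1$.
   Context: A column of a binary matrix is dirty if it contains both $0$ and $1$. For rows $u,w\in\{0,1\}^\ell$, $D(u,w)=\{j\in[\ell]: u[j]\ne w[j]\}$ and $d(u,w)=|D(u,w)|$ (Hamming distance); $\delta(\mathbf{T})=\max_{i\ne i'}d(\mathbf{T}[i],\mathbf{T}[i'])$, where $\mathbf{T}[i]$ is the $i$-th row. For $x\in\mathbb{N}$, $\mathcal{T}_x$ is the set system (without duplicates) $\{D(\mathbf{T}[i],\mathbf{T}[n]) : i\in[n-1],\ d(\mathbf{T}[i],\mathbf{T}[n])=x\}$. *)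

theory Defs
  imports Main
begin

(* A binary n x l matrix is represented as T :: nat => nat => nat, with rows
   indexed by {1..n}, columns by {1..l}, entries T i j in {0,1}.
   Row i is the function T i (restricted to columns 1..l). *)

definition binary_matrix :: "nat \<Rightarrow> nat \<Rightarrow> (nat \<Rightarrow> nat \<Rightarrow> nat) \<Rightarrow> bool" where
  "binary_matrix n l T \<longleftrightarrow> (\<forall>i\<in>{1..n}. \<forall>j\<in>{1..l}. T i j \<in> {0, 1})"

definition dirty_column :: "nat \<Rightarrow> (nat \<Rightarrow> nat \<Rightarrow> nat) \<Rightarrow> nat \<Rightarrow> bool" where
  "dirty_column n T j \<longleftrightarrow> (\<exists>i\<in>{1..n}. T i j = 0) \<and> (\<exists>i\<in>{1..n}. T i j = 1)"

definition D :: "nat \<Rightarrow> (nat \<Rightarrow> nat) \<Rightarrow> (nat \<Rightarrow> nat) \<Rightarrow> nat set" where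
  "D l u w = {j \<in> {1..l}. u j \<noteq> w j}"

definition hdist :: "nat \<Rightarrow> (nat \<Rightarrow> nat) \<Rightarrow> (nat \<Rightarrow> nat) \<Rightarrow> nat" where
  "hdist l u w = card (D l u w)"

definition delta :: "nat \<Rightarrow> nat \<Rightarrow> (nat \<Rightarrow> nat \<Rightarrow> nat) \<Rightarrow> nat" where
  "delta n l T = Max ({hdist l (T i) (T i') | i i'. i \<in> {1..n} \<and> i' \<in> {1..n} \<and> i \<noteq> i'} \<union> {0})"

(* the set system T_x (a set of sets, so duplicates are removed automatically) *)
definition Tsys :: "nat \<Rightarrow> nat \<Rightarrow> (nat \<Rightarrow> nat \<Rightarrow> nat) \<Rightarrow> nat \<Rightarrow> nat set set" where
  "Tsys n l T x = {D l (T i) (T n) | i. i \<in> {1..n-1} \<and> hdist l (T i) (T n) = x}"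

end

theory Submission
  imports Defs
begin

text \<open>Write \<open>D\<^sub>i\<close> for the set of columns in which row \<open>i\<close> differs from the last row.
  Rows \<open>i\<close> and \<open>k\<close> differ at least on the symmetric difference of \<open>D\<^sub>i\<close> and \<open>D\<^sub>k\<close>,
  so with \<open>\<delta>(T) \<le> 2\<close> two members of \<open>\<T>\<^sub>2\<close> cannot be disjoint, and a singleton
  \<open>D\<^sub>i = {j}\<close> must lie inside every member of \<open>\<T>\<^sub>2\<close>. As every column is dirty, every
  column lies in some nonempty \<open>D\<^sub>i\<close>, hence in \<open>\<Union>\<T>\<^sub>2\<close>. Finally, a pairwise intersecting
  family of 2-sets has a union of at most \<open>|\<T>\<^sub>2| + 1\<close> elements: fixing one member \<open>P\<close>,
  every other member adds at most one point to \<open>P\<close>.\<close>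

lemma card_Union_intersecting_pairs:
  assumes "finite F" and "P \<in> F"
    and two: "\<And>Q. Q \<in> F \<Longrightarrow> card Q = 2"
    and intersect: "\<And>Q1 Q2. Q1 \<in> F \<Longrightarrow> Q2 \<in> F \<Longrightarrow> Q1 \<inter> Q2 \<noteq> {}"
  shows "card (\<Union>F) \<le> card F + 1"
proof -
  have card_diff_P: "card (Q - P) \<le> 1" if "Q \<in> F" for Q
  proof -
    have "finite Q" "card Q = 2" using two[OF that] card.infinite by fastforce+
    moreover have "Q \<inter> P \<noteq> {}" using intersect[OF that \<open>P \<in> F\<close>] .
    ultimately have "card (Q \<inter> P) \<ge> 1"
      by (simp add: Suc_leI card_gt_0_iff)
    then show ?thesis
      using \<open>finite Q\<close> \<open>card Q = 2\<close> by (simp add: Diff_Int2 card_Diff_subset_Int)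
  qed
  have "\<Union>F = P \<union> (\<Union>Q\<in>F - {P}. Q - P)" using \<open>P \<in> F\<close> by blast
  then have "card (\<Union>F) \<le> card P + card (\<Union>Q\<in>F - {P}. Q - P)"
    by (metis card_Un_le)
  also have "\<dots> \<le> card P + (\<Sum>Q\<in>F - {P}. card (Q - P))"
    by (intro add_left_mono card_UN_le) (simp add: \<open>finite F\<close>)
  also have "\<dots> \<le> card P + (\<Sum>Q\<in>F - {P}. 1)"
    using sum_mono[of "F - {P}" "\<lambda>Q. card (Q - P)" "\<lambda>_. 1"] card_diff_P by simp
  also have "\<dots> = card F + 1"
  proof -
    have "card F \<ge> 1" using \<open>finite F\<close> \<open>P \<in> F\<close> by (auto simp: Suc_le_eq card_gt_0_iff)
    then show ?thesis using \<open>finite F\<close> \<open>P \<in> F\<close> two[OF \<open>P \<in> F\<close>] by (simp add: card_Diff_singleton)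
  qed
  finally show ?thesis .
qed

lemma finite_D [simp]: "finite (D l u w)"
  unfolding D_def by simp

lemma sym_diff_D_subset: "sym_diff (D l u r) (D l w r) \<subseteq> D l u w"
  unfolding D_def by auto

lemma hdist_le_delta:
  assumes "i \<in> {1..n}" "i' \<in> {1..n}" "i \<noteq> i'"
  shows "hdist l (T i) (T i') \<le> delta n l T"
proof -
  have "{hdist l (T i) (T i') | i i'. i \<in> {1..n} \<and> i' \<in> {1..n} \<and> i \<noteq> i'}
        \<subseteq> (\<lambda>(i, i'). hdist l (T i) (T i')) ` ({1..n} \<times> {1..n})"
    by auto
  then have "finite ({hdist l (T i) (T i') | i i'. i \<in> {1..n} \<and> i' \<in> {1..n} \<and> i \<noteq> i'} \<union> {0})"
    by (simp add: finite_subset)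
  then show ?thesis
    unfolding delta_def by (rule Max_ge) (use assms in blast)
qed

lemma card_sym_diff_D_le_delta:
  assumes "i \<in> {1..n}" "k \<in> {1..n}" "i \<noteq> k"
  shows "card (sym_diff (D l (T i) r) (D l (T k) r)) \<le> delta n l T"
  using card_mono[OF finite_D sym_diff_D_subset] hdist_le_delta[OF assms]
  unfolding hdist_def by (meson le_trans)

lemma Tsys_memE:
  assumes "Q \<in> Tsys n l T x"
  obtains i where "i \<in> {1..n}" "i \<noteq> n" "card (D l (T i) (T n)) = x" "Q = D l (T i) (T n)"
  using assms unfolding Tsys_def hdist_def by force

lemma finite_Tsys: "finite (Tsys n l T x)"
proof (rule finite_subset)
  show "Tsys n l T x \<subseteq> (\<lambda>i. D l (T i) (T n)) ` {1..n}"
    by (blast elim: Tsys_memE)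
qed simp

lemma Tsys_intersect:
  assumes "delta n l T < 2 * x" "Q1 \<in> Tsys n l T x" "Q2 \<in> Tsys n l T x"
  shows "Q1 \<inter> Q2 \<noteq> {}"
proof
  assume disjoint: "Q1 \<inter> Q2 = {}"
  obtain i where i: "i \<in> {1..n}" "card (D l (T i) (T n)) = x" "Q1 = D l (T i) (T n)"
    using assms(2) by (rule Tsys_memE)
  obtain k where k: "k \<in> {1..n}" "card (D l (T k) (T n)) = x" "Q2 = D l (T k) (T n)"
    using assms(3) by (rule Tsys_memE)
  have "i \<noteq> k" using disjoint i k assms(1) by auto
  have "sym_diff Q1 Q2 = Q1 \<union> Q2" using disjoint by blast
  then have "card (sym_diff Q1 Q2) = 2 * x"
    using disjoint i k by (simp add: card_Un_disjoint)
  moreover have "card (sym_diff Q1 Q2) \<le> delta n l T"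
    using card_sym_diff_D_le_delta[OF i(1) k(1) \<open>i \<noteq> k\<close>] i k by simp
  ultimately show False using assms(1) by simp
qed

lemma dirty_column_differs_from_last_row:
  assumes "dirty_column n T j"
  obtains i where "i \<in> {1..n}" "T i j \<noteq> T n j"
  using assms unfolding dirty_column_def by (metis zero_neq_one)

lemma dirty_column_in_Union_Tsys2:
  assumes "delta n l T \<le> 2" "P \<in> Tsys n l T 2"
    and "j \<in> {1..l}" "dirty_column n T j"
  shows "j \<in> \<Union>(Tsys n l T 2)"
proof -
  obtain i where i: "i \<in> {1..n}" "T i j \<noteq> T n j"
    using assms(4) by (rule dirty_column_differs_from_last_row)
  then have "i \<noteq> n" "n \<in> {1..n}" by auto
  define Di where "Di = D l (T i) (T n)"
  have "j \<in> Di" using i assms(3) unfolding Di_def D_def by simp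
  have "card Di \<le> 2"
    using hdist_le_delta[of i n n l T] i(1) \<open>n \<in> {1..n}\<close> \<open>i \<noteq> n\<close> assms(1)
    unfolding Di_def hdist_def by simp
  moreover have "card Di \<noteq> 0" using \<open>j \<in> Di\<close> unfolding Di_def by auto
  ultimately consider "card Di = 2" | "card Di = 1" by linarith
  then show ?thesis
  proof cases
    case 1
    then have "Di \<in> Tsys n l T 2"
      using i(1) \<open>i \<noteq> n\<close> unfolding Di_def Tsys_def hdist_def by force
    then show ?thesis using \<open>j \<in> Di\<close> by blast
  next
    case 2
    then have "Di = {j}" using \<open>j \<in> Di\<close> by (metis card_1_singletonE singletonD)
    obtain k where k: "k \<in> {1..n}" "card (D l (T k) (T n)) = 2" "P = D l (T k) (T n)"
      using assms(2) by (rule Tsys_memE)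
    have "j \<in> P"
    proof (rule ccontr)
      assume "j \<notin> P"
      then have "sym_diff Di P = insert j P" using \<open>Di = {j}\<close> by auto
      then have "card (sym_diff Di P) = 3" using \<open>j \<notin> P\<close> k by simp
      moreover have "card (sym_diff Di P) \<le> delta n l T"
      proof -
        have "i \<noteq> k" using 2 k unfolding Di_def by auto
        then show ?thesis
          using card_sym_diff_D_le_delta[OF i(1) k(1)] k(3) unfolding Di_def by blast
      qed
      ultimately show False using assms(1) by simp
    qed
    then show ?thesis using assms(2) by blast
  qed
qed

theorem lemma9:
  fixes n l :: nat and T :: "nat \<Rightarrow> nat \<Rightarrow> nat"
  assumes "binary_matrix n l T"
    and "\<forall>j\<in>{1..l}. dirty_column n T j"
    and "delta n l T \<le> 2"
    and "Tsys n l T 2 \<noteq> {}"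
  shows "l \<le> card (Tsys n l T 2) + 1"
proof -
  obtain P where "P \<in> Tsys n l T 2" using assms(4) by blast
  have "l = card {1..l}" by simp
  also have "\<dots> \<le> card (\<Union>(Tsys n l T 2))"
  proof (rule card_mono)
    show "finite (\<Union>(Tsys n l T 2))"
      by (rule finite_Union[OF finite_Tsys]) (auto simp: Tsys_def)
    show "{1..l} \<subseteq> \<Union>(Tsys n l T 2)"
      using dirty_column_in_Union_Tsys2[OF assms(3) \<open>P \<in> _\<close>] assms(2) by blast
  qed
  also have "\<dots> \<le> card (Tsys n l T 2) + 1"
  proof (rule card_Union_intersecting_pairs[OF finite_Tsys \<open>P \<in> _\<close>])
    show "card Q = 2" if "Q \<in> Tsys n l T 2" for Q
      using that by (rule Tsys_memE) simp
    show "Q1 \<inter> Q2 \<noteq> {}" if "Q1 \<in> Tsys n l T 2" "Q2 \<in> Tsys n l T 2" for Q1 Q2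
      using Tsys_intersect[OF _ that] assms(3) by simp
  qed
  finally show ?thesis .
qed

end
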